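(* Let $\Lambda>0$ and let $u$ be a nonzero caloric polynomial on $\mathbb R^n\times(-\infty,0]$ with $N(1)\le\Lambda$. For every $\epsilon>0$ there exists $\delta=\delta(\epsilon,\Lambda)>0$ such that, for any integer $d$, if $N(1)\le d-\epsilon$ then $N(\delta)\le d-1+\epsilon$.
   Context: A caloric polynomial is a polynomial in $(x,t)$ solving $\partial_tu=\Delta u$. For $r>0$, $N(r)=\dfrac{2r^2\int_{\mathbb R^n}|\nabla u(x,-r^2)|^2G(x,-r^2)\,dx}{\int_{\mathbb R^n}u(x,-r^2)^2G(x,-r^2)\,dx}$, where $G(x,t)=(4\pi(-t))^{-n/2}e^{-|x|^2/(4(-t))}$ for $t<0$. *)

theory Defs
  imports "HOL-Analysis.Analysis"
begin

inductive_set poly_fun :: "(real^'n \<Rightarrow> real \<Rightarrow> real) set" where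
  pf_const: "(\<lambda>x t. c) \<in> poly_fun"
| pf_coord: "(\<lambda>x t. x $ i) \<in> poly_fun"
| pf_time: "(\<lambda>x t. t) \<in> poly_fun"
| pf_add: "p \<in> poly_fun \<Longrightarrow> q \<in> poly_fun \<Longrightarrow> (\<lambda>x t. p x t + q x t) \<in> poly_fun"
| pf_mult: "p \<in> poly_fun \<Longrightarrow> q \<in> poly_fun \<Longrightarrow> (\<lambda>x t. p x t * q x t) \<in> poly_fun"

definition pdx :: "(real^'n \<Rightarrow> real \<Rightarrow> real) \<Rightarrow> 'n \<Rightarrow> real^'n \<Rightarrow> real \<Rightarrow> real" where
  "pdx u i x t = deriv (\<lambda>s. u (x + s *\<^sub>R axis i 1) t) 0"

definition pdt :: "(real^'n \<Rightarrow> real \<Rightarrow> real) \<Rightarrow> real^'n \<Rightarrow> real \<Rightarrow> real" where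
  "pdt u x t = deriv (\<lambda>s. u x s) t"

definition laplacian :: "(real^'n \<Rightarrow> real \<Rightarrow> real) \<Rightarrow> real^'n \<Rightarrow> real \<Rightarrow> real" where
  "laplacian u x t = (\<Sum>i\<in>UNIV. pdx (pdx u i) i x t)"

definition grad_sq :: "(real^'n \<Rightarrow> real \<Rightarrow> real) \<Rightarrow> real^'n \<Rightarrow> real \<Rightarrow> real" where
  "grad_sq u x t = (\<Sum>i\<in>UNIV. (pdx u i x t)\<^sup>2)"

definition caloric_poly :: "(real^'n \<Rightarrow> real \<Rightarrow> real) \<Rightarrow> bool" where
  "caloric_poly u \<longleftrightarrow> u \<in> poly_fun \<and> (\<forall>x t. pdt u x t = laplacian u x t)"

definition heatG :: "real^'n \<Rightarrow> real \<Rightarrow> real" where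
  "heatG x t = (4 * pi * (- t)) powr (- real CARD('n) / 2) * exp (- (norm x)\<^sup>2 / (4 * (- t)))"

definition freq :: "(real^'n \<Rightarrow> real \<Rightarrow> real) \<Rightarrow> real \<Rightarrow> real" where
  "freq u r = 2 * r\<^sup>2 * (LINT x|lborel. grad_sq u x (- r\<^sup>2) * heatG x (- r\<^sup>2))
              / (LINT x|lborel. (u x (- r\<^sup>2))\<^sup>2 * heatG x (- r\<^sup>2))"

end

theory Submission
  imports Defs "HOL-Probability.Distributions"
begin

text \<open>Write \<open>u(a y, -a\<^sup>2) = \<Sum>\<^sub>k Q\<^sub>k(y) a\<^sup>k\<close>. Since \<open>u\<close> is caloric, each \<open>Q\<^sub>k\<close> is an eigenfunction,
  with eigenvalue \<open>k\<close>, of the Ornstein--Uhlenbeck operator \<open>y \<cdot> \<nabla> - 2 \<Delta>\<close>, which is symmetric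
  with respect to the Gaussian \<open>G(\<cdot>, -1)\<close>. Hence the \<open>Q\<^sub>k\<close> are orthogonal in \<open>L\<^sup>2(G)\<close>, and the
  substitution \<open>x = r y\<close> gives \<open>N(r) = \<Sum>\<^sub>k k a\<^sub>k r\<^sup>2\<^sup>k / \<Sum>\<^sub>k a\<^sub>k r\<^sup>2\<^sup>k\<close> with \<open>a\<^sub>k = \<parallel>Q\<^sub>k\<parallel>\<^sup>2 \<ge> 0\<close>.
  The bounds \<open>N(1) \<le> \<Lambda>\<close> and \<open>N(1) \<le> d - \<epsilon>\<close> put a fixed fraction of the total weight on the
  degrees below \<open>d\<close>, and for small \<open>r = \<delta>\<close> these degrees dominate.\<close>

section \<open>Chain rule for polynomial functions\<close>

text \<open>\<open>pdx\<close> and \<open>pdt\<close> are derivatives along coordinate lines only; this predicate asks that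
  they also compute the derivative along every differentiable space-time curve \<open>(X, T)\<close>.\<close>
definition obeys_chain_rule :: "(real^'n \<Rightarrow> real \<Rightarrow> real) \<Rightarrow> bool" where
  "obeys_chain_rule p \<longleftrightarrow> (\<forall>X X' T T' s. (\<forall>j. ((\<lambda>s. X s $ j) has_real_derivative X' $ j) (at s)) \<longrightarrow>
     (T has_real_derivative T') (at s) \<longrightarrow>
     ((\<lambda>s. p (X s) (T s)) has_real_derivative
        (\<Sum>i\<in>UNIV. X' $ i * pdx p i (X s) (T s)) + T' * pdt p (X s) (T s)) (at s))"

lemma obeys_chain_ruleD:
  assumes "obeys_chain_rule p"
    and "\<And>j. ((\<lambda>s. X s $ j) has_real_derivative X' $ j) (at s)" and "(T has_real_derivative T') (at s)"
  shows "((\<lambda>s. p (X s) (T s)) has_real_derivative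
           (\<Sum>i\<in>UNIV. X' $ i * pdx p i (X s) (T s)) + T' * pdt p (X s) (T s)) (at s)"
  using assms unfolding obeys_chain_rule_def by blast

lemma obeys_chain_ruleI:
  assumes "\<And>X X' T T' s. (\<And>j. ((\<lambda>s. X s $ j) has_real_derivative X' $ j) (at s)) \<Longrightarrow>
    (T has_real_derivative T') (at s) \<Longrightarrow>
    ((\<lambda>s. p (X s) (T s)) has_real_derivative
      (\<Sum>i\<in>UNIV. X' $ i * pdx p i (X s) (T s)) + T' * pdt p (X s) (T s)) (at s)"
  shows "obeys_chain_rule p"
  using assms unfolding obeys_chain_rule_def by blast

lemma sum_axis_mult: "(\<Sum>k\<in>UNIV. axis i c $ k * f k) = c * f i" for c :: real
proof -
  have "axis i c $ k * f k = (if k = i then c * f i else 0)" for k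
    by (auto simp: axis_def)
  then show ?thesis by simp
qed

lemma obeys_chain_rule_axis:
  assumes "obeys_chain_rule p"
  shows "((\<lambda>s. p (x + s *\<^sub>R axis i c) t) has_real_derivative c * pdx p i (x + s *\<^sub>R axis i c) t) (at s)"
proof -
  have "((\<lambda>s. (x + s *\<^sub>R axis i c) $ j) has_real_derivative axis i c $ j) (at s)" for j
    by (auto intro!: derivative_eq_intros)
  from obeys_chain_ruleD[OF assms this DERIV_const]
  show ?thesis by (simp add: sum_axis_mult)
qed

lemma obeys_chain_rule_pdt:
  assumes "obeys_chain_rule p"
  shows "((\<lambda>s. p x s) has_real_derivative pdt p x t) (at t)"
  using obeys_chain_ruleD[OF assms, of "\<lambda>_. x" 0 t "\<lambda>s. s" 1] by simp

lemma pdx_eqI: "((\<lambda>s. p (x + s *\<^sub>R axis i 1) t) has_real_derivative D) (at 0) \<Longrightarrow> pdx p i x t = D"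
  unfolding pdx_def by (rule DERIV_imp_deriv)

lemma pdt_eqI: "((\<lambda>s. p x s) has_real_derivative D) (at t) \<Longrightarrow> pdt p x t = D"
  unfolding pdt_def by (rule DERIV_imp_deriv)

lemma obeys_chain_rule_pdx:
  "obeys_chain_rule p \<Longrightarrow> ((\<lambda>s. p (x + s *\<^sub>R axis i 1) t) has_real_derivative pdx p i x t) (at 0)"
  using obeys_chain_rule_axis[of p x i 1 t 0] by simp

lemma pdx_add:
  "obeys_chain_rule p \<Longrightarrow> obeys_chain_rule q \<Longrightarrow>
    pdx (\<lambda>x t. p x t + q x t) i = (\<lambda>x t. pdx p i x t + pdx q i x t)"
  by (intro ext pdx_eqI DERIV_add obeys_chain_rule_pdx)

lemma pdx_mult:
  "obeys_chain_rule p \<Longrightarrow> obeys_chain_rule q \<Longrightarrow>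
    pdx (\<lambda>x t. p x t * q x t) i = (\<lambda>x t. pdx p i x t * q x t + p x t * pdx q i x t)"
  by (auto intro!: ext pdx_eqI derivative_eq_intros obeys_chain_rule_pdx)

lemma pdt_add:
  "obeys_chain_rule p \<Longrightarrow> obeys_chain_rule q \<Longrightarrow>
    pdt (\<lambda>x t. p x t + q x t) = (\<lambda>x t. pdt p x t + pdt q x t)"
  by (intro ext pdt_eqI DERIV_add obeys_chain_rule_pdt)

lemma pdt_mult:
  "obeys_chain_rule p \<Longrightarrow> obeys_chain_rule q \<Longrightarrow>
    pdt (\<lambda>x t. p x t * q x t) = (\<lambda>x t. pdt p x t * q x t + p x t * pdt q x t)"
  by (auto intro!: ext pdt_eqI derivative_eq_intros obeys_chain_rule_pdt)

lemma pdx_const: "pdx (\<lambda>x t. c) i = (\<lambda>x t. 0)"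
  by (intro ext pdx_eqI) simp

lemma pdx_coord: "pdx (\<lambda>x t. x $ j) i = (\<lambda>x t. if j = i then 1 else 0)"
  by (intro ext pdx_eqI) (auto simp: axis_def intro!: derivative_eq_intros)

lemma pdx_time: "pdx (\<lambda>x t. t) i = (\<lambda>x t. 0)"
  by (intro ext pdx_eqI) simp

lemma pdt_const: "pdt (\<lambda>x t. c) = (\<lambda>x t. 0)"
  by (intro ext pdt_eqI) simp

lemma pdt_coord: "pdt (\<lambda>x t. x $ j) = (\<lambda>x t. 0)"
  by (intro ext pdt_eqI) simp

lemma pdt_time: "pdt (\<lambda>x t. t) = (\<lambda>x t. 1)"
  by (intro ext pdt_eqI) simp

lemma poly_fun_obeys_chain_rule:
  fixes p :: "real^'n \<Rightarrow> real \<Rightarrow> real"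
  shows "p \<in> poly_fun \<Longrightarrow> obeys_chain_rule p"
proof (induction p rule: poly_fun.induct)
  case (pf_const c)
  show ?case by (simp add: obeys_chain_rule_def pdx_const pdt_const)
next
  case (pf_coord j)
  show ?case by (auto simp: obeys_chain_rule_def pdx_coord pdt_coord if_distrib cong: if_cong)
next
  case pf_time
  show ?case by (simp add: obeys_chain_rule_def pdx_time pdt_time)
next
  case (pf_add p q)
  show ?case
  proof (rule obeys_chain_ruleI)
    fix X :: "real \<Rightarrow> real^'n" and X' T T' s
    assume X: "\<And>j. ((\<lambda>s. X s $ j) has_real_derivative X' $ j) (at s)"
      and T: "(T has_real_derivative T') (at s)"
    from DERIV_add[OF obeys_chain_ruleD[OF pf_add.IH(1) X T] obeys_chain_ruleD[OF pf_add.IH(2) X T]]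
    show "((\<lambda>s. p (X s) (T s) + q (X s) (T s)) has_real_derivative
      (\<Sum>i\<in>UNIV. X' $ i * pdx (\<lambda>x t. p x t + q x t) i (X s) (T s)) +
      T' * pdt (\<lambda>x t. p x t + q x t) (X s) (T s)) (at s)"
      by (simp add: pdx_add[OF pf_add.IH] pdt_add[OF pf_add.IH] distrib_left sum.distrib algebra_simps)
  qed
next
  case (pf_mult p q)
  show ?case
  proof (rule obeys_chain_ruleI)
    fix X :: "real \<Rightarrow> real^'n" and X' T T' s
    assume X: "\<And>j. ((\<lambda>s. X s $ j) has_real_derivative X' $ j) (at s)"
      and T: "(T has_real_derivative T') (at s)"
    from DERIV_mult[OF obeys_chain_ruleD[OF pf_mult.IH(1) X T] obeys_chain_ruleD[OF pf_mult.IH(2) X T]]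
    show "((\<lambda>s. p (X s) (T s) * q (X s) (T s)) has_real_derivative
      (\<Sum>i\<in>UNIV. X' $ i * pdx (\<lambda>x t. p x t * q x t) i (X s) (T s)) +
      T' * pdt (\<lambda>x t. p x t * q x t) (X s) (T s)) (at s)"
      by (simp add: pdx_mult[OF pf_mult.IH] pdt_mult[OF pf_mult.IH] distrib_left distrib_right
          sum.distrib sum_distrib_left sum_distrib_right algebra_simps)
  qed
qed

lemma poly_fun_scale: "p \<in> poly_fun \<Longrightarrow> (\<lambda>x t. c * p x t) \<in> poly_fun"
  using pf_mult[OF pf_const] by blast

lemma poly_fun_sum:
  "finite K \<Longrightarrow> (\<And>k. k \<in> K \<Longrightarrow> Q k \<in> poly_fun) \<Longrightarrow> (\<lambda>x t. \<Sum>k\<in>K. Q k x t) \<in> poly_fun"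
proof (induction K rule: finite_induct)
  case empty
  then show ?case using pf_const[of 0] by simp
next
  case (insert k K)
  then show ?case using pf_add[of "Q k" "\<lambda>x t. \<Sum>k\<in>K. Q k x t"] by simp
qed

lemma poly_fun_pdx: "p \<in> poly_fun \<Longrightarrow> pdx p i \<in> poly_fun"
proof (induction p rule: poly_fun.induct)
  case (pf_add p q)
  then show ?case by (simp add: pdx_add poly_fun_obeys_chain_rule poly_fun.pf_add)
next
  case (pf_mult p q)
  then show ?case by (simp add: pdx_mult poly_fun_obeys_chain_rule poly_fun.pf_add poly_fun.pf_mult)
qed (simp_all add: pdx_const pdx_coord pdx_time poly_fun.pf_const)

section \<open>Parabolic expansion of a caloric polynomial\<close>

definition radial_deriv :: "(real^'n \<Rightarrow> real \<Rightarrow> real) \<Rightarrow> real^'n \<Rightarrow> real \<Rightarrow> real" where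
  "radial_deriv u y t = (\<Sum>i\<in>UNIV. y $ i * pdx u i y t)"

text \<open>\<open>Q k y\<close> is the value at \<open>(y, -1)\<close> of the part of \<open>u\<close> that is homogeneous of degree \<open>k\<close>
  under the parabolic scaling \<open>(x, t) \<mapsto> (a x, a\<^sup>2 t)\<close>. The time argument of \<open>Q k\<close> is a dummy.\<close>
definition parabolic_expansion ::
    "(real^'n \<Rightarrow> real \<Rightarrow> real) \<Rightarrow> nat \<Rightarrow> (nat \<Rightarrow> real^'n \<Rightarrow> real \<Rightarrow> real) \<Rightarrow> bool" where
  "parabolic_expansion u D Q \<longleftrightarrow> (\<forall>k. Q k \<in> poly_fun) \<and> (\<forall>k>D. Q k = (\<lambda>y t. 0)) \<and>
     (\<forall>a y t. u (a *\<^sub>R y) (-(a\<^sup>2)) = (\<Sum>k\<le>D. Q k y t * a ^ k))"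

lemma parabolic_expansion_mono:
  assumes "parabolic_expansion u D Q" "D \<le> E"
  shows "parabolic_expansion u E Q"
proof -
  have "(\<Sum>k\<le>D. Q k y t * a ^ k) = (\<Sum>k\<le>E. Q k y t * a ^ k)" for a y t
    using assms by (intro sum.mono_neutral_left) (auto simp: parabolic_expansion_def)
  then show ?thesis using assms unfolding parabolic_expansion_def by auto
qed

lemma parabolic_expansion_const: "parabolic_expansion (\<lambda>x t. c) 0 (\<lambda>k y t. if k = 0 then c else 0)"
  by (auto simp: parabolic_expansion_def intro: poly_fun.intros)

lemma parabolic_expansion_coord:
  "parabolic_expansion (\<lambda>x t. x $ i) 1 (\<lambda>k. if k = 1 then (\<lambda>y t. y $ i) else (\<lambda>y t. 0))"
  by (auto simp: parabolic_expansion_def intro: poly_fun.intros)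

lemma parabolic_expansion_time: "parabolic_expansion (\<lambda>x t. t) 2 (\<lambda>k y t. if k = 2 then -1 else 0)"
  by (auto simp: parabolic_expansion_def numeral_2_eq_2 intro: poly_fun.intros)

lemma parabolic_expansion_add:
  assumes "parabolic_expansion p D P" "parabolic_expansion q D Q"
  shows "parabolic_expansion (\<lambda>x t. p x t + q x t) D (\<lambda>k y t. P k y t + Q k y t)"
  using assms by (auto simp: parabolic_expansion_def sum.distrib distrib_right intro: poly_fun.pf_add)

lemma parabolic_expansion_mult:
  assumes p: "parabolic_expansion p D P" and q: "parabolic_expansion q E Q"
  shows "parabolic_expansion (\<lambda>x t. p x t * q x t) (D + E) (\<lambda>k y t. \<Sum>j\<le>k. P j y t * Q (k - j) y t)"
  unfolding parabolic_expansion_def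
proof (intro conjI allI impI)
  show "(\<lambda>y t. \<Sum>j\<le>k. P j y t * Q (k - j) y t) \<in> poly_fun" for k
    using p q by (intro poly_fun_sum) (auto simp: parabolic_expansion_def intro: poly_fun.pf_mult)
  show "(\<lambda>y t. \<Sum>j\<le>k. P j y t * Q (k - j) y t) = (\<lambda>y t. 0)" if "D + E < k" for k
  proof -
    have "P j y t * Q (k - j) y t = 0" for j y t
      using p q that by (cases "j \<le> D") (auto simp: parabolic_expansion_def)
    then show ?thesis by (intro ext sum.neutral) blast
  qed
  fix a y t
  have "\<And>j. D < j \<Longrightarrow> P j y t = 0" "\<And>j. E < j \<Longrightarrow> Q j y t = 0"
    using p q by (auto simp: parabolic_expansion_def)
  from polynomial_product[of D "\<lambda>j. P j y t" E "\<lambda>j. Q j y t" a, OF this]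
  show "p (a *\<^sub>R y) (-(a\<^sup>2)) * q (a *\<^sub>R y) (-(a\<^sup>2)) = (\<Sum>k\<le>D + E. (\<Sum>j\<le>k. P j y t * Q (k - j) y t) * a ^ k)"
    using p q by (simp add: parabolic_expansion_def)
qed

lemma poly_fun_parabolic_expansion: "u \<in> poly_fun \<Longrightarrow> \<exists>D Q. parabolic_expansion u D Q"
proof (induction u rule: poly_fun.induct)
  case (pf_add p q)
  then obtain D P E Q where "parabolic_expansion p D P" "parabolic_expansion q E Q" by blast
  then have "parabolic_expansion p (D + E) P" "parabolic_expansion q (D + E) Q"
    by (auto intro: parabolic_expansion_mono)
  then show ?case by (blast intro: parabolic_expansion_add)
next
  case (pf_mult p q)
  then show ?case by (blast intro: parabolic_expansion_mult)
qed (blast intro: parabolic_expansion_const parabolic_expansion_coord parabolic_expansion_time)+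

lemma pdx_scaled:
  assumes "obeys_chain_rule u"
  shows "pdx (\<lambda>y t. c * u (a *\<^sub>R y) b) i y t = c * (a * pdx u i (a *\<^sub>R y) b)"
proof (rule pdx_eqI)
  have "a *\<^sub>R (y + s *\<^sub>R axis i 1) = a *\<^sub>R y + s *\<^sub>R axis i a" for s
    by (simp add: vec_eq_iff axis_def algebra_simps)
  then show "((\<lambda>s. c * u (a *\<^sub>R (y + s *\<^sub>R axis i 1)) b) has_real_derivative c * (a * pdx u i (a *\<^sub>R y) b)) (at 0)"
    using DERIV_cmult[OF obeys_chain_rule_axis[OF assms, of "a *\<^sub>R y" i a b 0], of c] by simp
qed

lemma pdx_sum_mult_const:
  assumes "finite K" "\<And>k. k \<in> K \<Longrightarrow> obeys_chain_rule (Q k)"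
  shows "pdx (\<lambda>y t. \<Sum>k\<in>K. Q k y t * c k) i y t = (\<Sum>k\<in>K. pdx (Q k) i y t * c k)"
  using assms by (intro pdx_eqI DERIV_sum DERIV_cmult_right obeys_chain_rule_pdx) auto

lemma pdx_scaled_expansion:
  assumes "obeys_chain_rule v" "\<And>k. obeys_chain_rule (R k)"
    and "\<And>y t. c * v (a *\<^sub>R y) b = (\<Sum>k\<le>D. R k y t * a ^ k)"
  shows "c * (a * pdx v i (a *\<^sub>R y) b) = (\<Sum>k\<le>D. pdx (R k) i y t * a ^ k)"
proof -
  have "(\<lambda>y t. c * v (a *\<^sub>R y) b) = (\<lambda>y t. \<Sum>k\<le>D. R k y t * a ^ k)"
    using assms(3) by blast
  then have "pdx (\<lambda>y t. c * v (a *\<^sub>R y) b) i y t = pdx (\<lambda>y t. \<Sum>k\<le>D. R k y t * a ^ k) i y t"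
    by simp
  then show ?thesis
    by (simp add: pdx_scaled[OF assms(1)] pdx_sum_mult_const[OF _ assms(2)])
qed

lemma expansion_pdx:
  assumes "u \<in> poly_fun" "parabolic_expansion u D Q"
  shows "a * pdx u i (a *\<^sub>R y) (-(a\<^sup>2)) = (\<Sum>k\<le>D. pdx (Q k) i y t * a ^ k)"
  using pdx_scaled_expansion[of u Q 1 a "-(a\<^sup>2)" D] assms
  by (simp add: parabolic_expansion_def poly_fun_obeys_chain_rule)

lemma expansion_laplacian:
  assumes "u \<in> poly_fun" "parabolic_expansion u D Q"
  shows "a\<^sup>2 * laplacian u (a *\<^sub>R y) (-(a\<^sup>2)) = (\<Sum>k\<le>D. laplacian (Q k) y t * a ^ k)"
proof -
  have "\<forall>k. Q k \<in> poly_fun" using assms(2) by (simp add: parabolic_expansion_def)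
  then have "a * (a * pdx (pdx u i) i (a *\<^sub>R y) (-(a\<^sup>2))) = (\<Sum>k\<le>D. pdx (pdx (Q k) i) i y t * a ^ k)" for i
    using expansion_pdx[OF assms]
    by (intro pdx_scaled_expansion) (auto simp: poly_fun_obeys_chain_rule poly_fun_pdx assms(1))
  then have "a\<^sup>2 * laplacian u (a *\<^sub>R y) (-(a\<^sup>2)) = (\<Sum>i\<in>UNIV. \<Sum>k\<le>D. pdx (pdx (Q k) i) i y t * a ^ k)"
    by (simp add: laplacian_def sum_distrib_left power2_eq_square mult.assoc)
  also have "\<dots> = (\<Sum>k\<le>D. \<Sum>i\<in>UNIV. pdx (pdx (Q k) i) i y t * a ^ k)"
    by (rule sum.swap)
  finally show ?thesis
    by (simp add: laplacian_def sum_distrib_right)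
qed

text \<open>Differentiate \<open>a \<mapsto> u (a y, -a\<^sup>2)\<close> once by the chain rule and once through the expansion.\<close>
lemma expansion_euler_identity:
  assumes "u \<in> poly_fun" "parabolic_expansion u D Q"
  shows "(\<Sum>k\<le>D. real k * Q k y t * a ^ k) =
    (\<Sum>i\<in>UNIV. y $ i * (a * pdx u i (a *\<^sub>R y) (-(a\<^sup>2)))) - 2 * a\<^sup>2 * pdt u (a *\<^sub>R y) (-(a\<^sup>2))"
proof -
  have "((\<lambda>s. (s *\<^sub>R y) $ j) has_real_derivative y $ j) (at a)" for j
    by (auto intro!: derivative_eq_intros)
  moreover have "((\<lambda>s. -(s\<^sup>2)) has_real_derivative - 2 * a) (at a)"
    by (auto intro!: derivative_eq_intros)
  ultimately have u_deriv: "((\<lambda>s. u (s *\<^sub>R y) (-(s\<^sup>2))) has_real_derivative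
      (\<Sum>i\<in>UNIV. y $ i * pdx u i (a *\<^sub>R y) (-(a\<^sup>2))) + (- 2 * a) * pdt u (a *\<^sub>R y) (-(a\<^sup>2))) (at a)"
    by (rule obeys_chain_ruleD[OF poly_fun_obeys_chain_rule[OF assms(1)]])
  have "(\<lambda>s. u (s *\<^sub>R y) (-(s\<^sup>2))) = (\<lambda>s. \<Sum>k\<le>D. Q k y t * s ^ k)"
    using assms(2) by (auto simp: parabolic_expansion_def)
  moreover have "((\<lambda>s. \<Sum>k\<le>D. Q k y t * s ^ k) has_real_derivative
      (\<Sum>k\<le>D. real k * a ^ (k - Suc 0) * Q k y t)) (at a)"
    by (auto intro!: derivative_eq_intros)
  ultimately have "((\<lambda>s. u (s *\<^sub>R y) (-(s\<^sup>2))) has_real_derivative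
      (\<Sum>k\<le>D. real k * a ^ (k - Suc 0) * Q k y t)) (at a)"
    by simp
  from DERIV_unique[OF this u_deriv]
  have "(\<Sum>k\<le>D. real k * a ^ (k - Suc 0) * Q k y t) =
      (\<Sum>i\<in>UNIV. y $ i * pdx u i (a *\<^sub>R y) (-(a\<^sup>2))) + (- 2 * a) * pdt u (a *\<^sub>R y) (-(a\<^sup>2))" .
  then have "a * (\<Sum>k\<le>D. real k * a ^ (k - Suc 0) * Q k y t) =
      (\<Sum>i\<in>UNIV. y $ i * (a * pdx u i (a *\<^sub>R y) (-(a\<^sup>2)))) - 2 * a\<^sup>2 * pdt u (a *\<^sub>R y) (-(a\<^sup>2))"
    by (simp add: right_diff_distrib sum_distrib_left power2_eq_square mult_ac)
  moreover have "a * (real k * a ^ (k - Suc 0) * Q k y t) = real k * Q k y t * a ^ k" for k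
    by (cases k) (auto simp: algebra_simps)
  ultimately show ?thesis by (simp add: sum_distrib_left)
qed

lemma caloric_expansion_eigen:
  assumes "caloric_poly u" "parabolic_expansion u D Q"
  shows "radial_deriv (Q k) y t - 2 * laplacian (Q k) y t = real k * Q k y t"
proof (cases "k \<le> D")
  case False
  then have "Q k = (\<lambda>y t. 0)" using assms(2) by (simp add: parabolic_expansion_def)
  then show ?thesis by (simp add: radial_deriv_def laplacian_def pdx_const)
next
  case True
  have u: "u \<in> poly_fun" and heat: "\<And>x t. pdt u x t = laplacian u x t"
    using assms(1) by (auto simp: caloric_poly_def)
  have "(\<Sum>k\<le>D. (real k * Q k y t - radial_deriv (Q k) y t + 2 * laplacian (Q k) y t) * a ^ k) = 0" for a
  proof -
    have "(\<Sum>i\<in>UNIV. y $ i * (a * pdx u i (a *\<^sub>R y) (-(a\<^sup>2)))) =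
        (\<Sum>i\<in>UNIV. \<Sum>k\<le>D. y $ i * pdx (Q k) i y t * a ^ k)"
      by (simp add: expansion_pdx[OF u assms(2), where t=t] sum_distrib_left mult.assoc)
    also have "\<dots> = (\<Sum>k\<le>D. \<Sum>i\<in>UNIV. y $ i * pdx (Q k) i y t * a ^ k)"
      by (rule sum.swap)
    also have "\<dots> = (\<Sum>k\<le>D. radial_deriv (Q k) y t * a ^ k)"
      by (simp add: radial_deriv_def sum_distrib_right)
    finally have radial: "(\<Sum>i\<in>UNIV. y $ i * (a * pdx u i (a *\<^sub>R y) (-(a\<^sup>2)))) =
        (\<Sum>k\<le>D. radial_deriv (Q k) y t * a ^ k)" .
    have "(\<Sum>k\<le>D. real k * Q k y t * a ^ k) =
        (\<Sum>i\<in>UNIV. y $ i * (a * pdx u i (a *\<^sub>R y) (-(a\<^sup>2)))) - 2 * (a\<^sup>2 * laplacian u (a *\<^sub>R y) (-(a\<^sup>2)))"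
      using expansion_euler_identity[OF u assms(2), of y t a] by (simp add: heat mult.assoc)
    also have "\<dots> = (\<Sum>k\<le>D. radial_deriv (Q k) y t * a ^ k) - 2 * (\<Sum>k\<le>D. laplacian (Q k) y t * a ^ k)"
      by (simp only: radial expansion_laplacian[OF u assms(2), of a y t])
    finally show ?thesis
      by (simp add: sum.distrib sum_subtractf sum_distrib_left distrib_right left_diff_distrib mult.assoc)
  qed
  then show ?thesis using polyfun_eq_0[THEN iffD1] True by fastforce
qed

section \<open>Gaussian integrals\<close>

definition exp_bounded :: "('a::real_normed_vector \<Rightarrow> real) \<Rightarrow> bool" where
  "exp_bounded f \<longleftrightarrow> (\<exists>C \<alpha>. 0 \<le> C \<and> 0 \<le> \<alpha> \<and> (\<forall>y. \<bar>f y\<bar> \<le> C * exp (\<alpha> * norm y)))"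

lemma exp_bounded_add:
  assumes "exp_bounded f" "exp_bounded g"
  shows "exp_bounded (\<lambda>y. f y + g y)"
proof -
  obtain C1 \<alpha>1 where C1: "0 \<le> C1" and \<alpha>1: "0 \<le> \<alpha>1" and f: "\<And>y. \<bar>f y\<bar> \<le> C1 * exp (\<alpha>1 * norm y)"
    using assms(1) unfolding exp_bounded_def by blast
  obtain C2 \<alpha>2 where C2: "0 \<le> C2" and \<alpha>2: "0 \<le> \<alpha>2" and g: "\<And>y. \<bar>g y\<bar> \<le> C2 * exp (\<alpha>2 * norm y)"
    using assms(2) unfolding exp_bounded_def by blast
  have "\<bar>f y + g y\<bar> \<le> (C1 + C2) * exp ((\<alpha>1 + \<alpha>2) * norm y)" for y
  proof -
    have "exp (\<alpha>1 * norm y) \<le> exp ((\<alpha>1 + \<alpha>2) * norm y)" "exp (\<alpha>2 * norm y) \<le> exp ((\<alpha>1 + \<alpha>2) * norm y)"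
      using \<alpha>1 \<alpha>2 by (simp_all add: mult_right_mono)
    then have "C1 * exp (\<alpha>1 * norm y) + C2 * exp (\<alpha>2 * norm y) \<le> (C1 + C2) * exp ((\<alpha>1 + \<alpha>2) * norm y)"
      using C1 C2 by (simp add: distrib_right add_mono mult_left_mono)
    then show ?thesis using f[of y] g[of y] abs_triangle_ineq[of "f y" "g y"] by linarith
  qed
  with \<alpha>1 \<alpha>2 show ?thesis
    unfolding exp_bounded_def by (intro exI[of _ "C1 + C2"] exI[of _ "\<alpha>1 + \<alpha>2"]) (auto simp: C1 C2)
qed

lemma exp_bounded_mult:
  assumes "exp_bounded f" "exp_bounded g"
  shows "exp_bounded (\<lambda>y. f y * g y)"
proof -
  obtain C1 \<alpha>1 where C1: "0 \<le> C1" and \<alpha>1: "0 \<le> \<alpha>1" and f: "\<And>y. \<bar>f y\<bar> \<le> C1 * exp (\<alpha>1 * norm y)"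
    using assms(1) unfolding exp_bounded_def by blast
  obtain C2 \<alpha>2 where C2: "0 \<le> C2" and \<alpha>2: "0 \<le> \<alpha>2" and g: "\<And>y. \<bar>g y\<bar> \<le> C2 * exp (\<alpha>2 * norm y)"
    using assms(2) unfolding exp_bounded_def by blast
  have "\<bar>f y * g y\<bar> \<le> (C1 * exp (\<alpha>1 * norm y)) * (C2 * exp (\<alpha>2 * norm y))" for y
    unfolding abs_mult using f g C1 C2 by (intro mult_mono) auto
  then have "\<bar>f y * g y\<bar> \<le> (C1 * C2) * exp ((\<alpha>1 + \<alpha>2) * norm y)" for y
    unfolding distrib_right exp_add by (simp add: mult_ac)
  with \<alpha>1 \<alpha>2 show ?thesis
    unfolding exp_bounded_def by (intro exI[of _ "C1 * C2"] exI[of _ "\<alpha>1 + \<alpha>2"]) (auto simp: C1 C2)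
qed

lemma poly_fun_exp_bounded: "p \<in> poly_fun \<Longrightarrow> exp_bounded (\<lambda>y. p y t)"
proof (induction p rule: poly_fun.induct)
  case (pf_const c)
  show ?case unfolding exp_bounded_def by (intro exI[of _ "\<bar>c\<bar>"] exI[of _ 0]) auto
next
  case (pf_coord i)
  have "\<bar>y $ i\<bar> \<le> exp (norm y)" for y :: "real^'a"
    using component_le_norm_cart[of y i] exp_ge_add_one_self[of "norm y"] by linarith
  then show ?case unfolding exp_bounded_def by (intro exI[of _ 1]) auto
next
  case (pf_add p q)
  from pf_add.IH show ?case by (rule exp_bounded_add)
next
  case (pf_mult p q)
  from pf_mult.IH show ?case by (rule exp_bounded_mult)
next
  case pf_time
  show ?case unfolding exp_bounded_def by (intro exI[of _ "\<bar>t\<bar>"] exI[of _ 0]) auto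
qed

lemma poly_fun_measurable: "p \<in> poly_fun \<Longrightarrow> (\<lambda>y. p y t) \<in> borel_measurable borel"
  by (induction p rule: poly_fun.induct) auto

lemma integrable_exp_minus_square_div_8: "integrable lborel (\<lambda>s::real. exp (- s\<^sup>2 / 8))"
proof -
  have "sqrt (2 * pi * 2\<^sup>2) * normal_density 0 2 s = exp (- s\<^sup>2 / 8)" for s :: real
    by (simp add: normal_density_def field_simps)
  moreover have "integrable lborel (\<lambda>s. sqrt (2 * pi * 2\<^sup>2) * normal_density 0 2 s)"
    by (intro integrable_mult_right integrable_normal_density) auto
  ultimately show ?thesis by simp
qed

text \<open>The Gaussian factorises over the coordinates, so its integral is a product of
  one-dimensional ones.\<close>
lemma integrable_gaussian: "integrable lborel (\<lambda>y::'a::euclidean_space. exp (- (norm y)\<^sup>2 / 8))"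
proof -
  have factor: "exp (- (norm y)\<^sup>2 / 8) = (\<Prod>b\<in>Basis. exp (- (y \<bullet> b)\<^sup>2 / 8))" for y :: 'a
  proof -
    have "(norm y)\<^sup>2 = (\<Sum>b\<in>Basis. (y \<bullet> b)\<^sup>2)"
      by (subst power2_norm_eq_inner, subst euclidean_inner) (simp add: power2_eq_square)
    then have "- (norm y)\<^sup>2 / 8 = (\<Sum>b\<in>Basis. - (y \<bullet> b)\<^sup>2 / 8)"
      by (simp add: sum_divide_distrib sum_negf)
    then show ?thesis by (simp add: exp_sum)
  qed
  have one_dim: "(\<integral>\<^sup>+s. ennreal (exp (- s\<^sup>2 / 8)) \<partial>lborel) = ennreal (LINT s|lborel. exp (- s\<^sup>2 / 8))"
    by (rule nn_integral_eq_integral[OF integrable_exp_minus_square_div_8]) auto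
  have "(\<integral>\<^sup>+y. ennreal (norm (exp (- (norm y)\<^sup>2 / 8))) \<partial>(lborel::'a measure)) =
      (\<integral>\<^sup>+y. (\<Prod>b\<in>(Basis::'a set). (\<lambda>b s. ennreal (exp (- s\<^sup>2 / 8))) b (y \<bullet> b)) \<partial>lborel)"
    unfolding factor by (simp add: prod_ennreal prod_nonneg)
  also have "\<dots> = (\<Prod>b\<in>(Basis::'a set). \<integral>\<^sup>+s. ennreal (exp (- s\<^sup>2 / 8)) \<partial>lborel)"
    by (rule nn_integral_lborel_prod) auto
  also have "\<dots> = ennreal (\<Prod>b\<in>(Basis::'a set). LINT s|lborel. exp (- s\<^sup>2 / 8))"
    unfolding one_dim by (rule prod_ennreal) auto
  also have "\<dots> < \<infinity>"
    by simp
  finally show ?thesis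
    by (intro integrableI_bounded) auto
qed

lemma integrable_exp_linear_gaussian:
  "integrable lborel (\<lambda>y::'a::euclidean_space. exp (\<beta> * norm y - (norm y)\<^sup>2 / 4))"
proof (rule Bochner_Integration.integrable_bound)
  show "integrable lborel (\<lambda>y::'a. exp (2 * \<beta>\<^sup>2) * exp (- (norm y)\<^sup>2 / 8))"
    by (intro integrable_mult_right integrable_gaussian)
  have "\<beta> * r - r\<^sup>2 / 4 \<le> 2 * \<beta>\<^sup>2 + - r\<^sup>2 / 8" for r :: real
    using zero_le_power2[of "r - 4 * \<beta>"] by (simp add: power2_eq_square algebra_simps)
  then show "AE y in lborel. norm (exp (\<beta> * norm y - (norm y)\<^sup>2 / 4)) \<le> norm (exp (2 * \<beta>\<^sup>2) * exp (- (norm y)\<^sup>2 / 8))"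
    by (simp flip: exp_add)
qed simp

lemma integrable_exp_bounded_gaussian:
  fixes f :: "'a::euclidean_space \<Rightarrow> real"
  assumes "f \<in> borel_measurable borel" "exp_bounded f"
  shows "integrable lborel (\<lambda>y. f y * exp (- (norm y)\<^sup>2 / 4))"
proof -
  obtain C \<alpha> where "0 \<le> C" "0 \<le> \<alpha>" and f: "\<And>y. \<bar>f y\<bar> \<le> C * exp (\<alpha> * norm y)"
    using assms(2) unfolding exp_bounded_def by blast
  show ?thesis
  proof (rule Bochner_Integration.integrable_bound)
    show "integrable lborel (\<lambda>y::'a. C * exp (\<alpha> * norm y - (norm y)\<^sup>2 / 4))"
      by (intro integrable_mult_right integrable_exp_linear_gaussian)
    show "(\<lambda>y. f y * exp (- (norm y)\<^sup>2 / 4)) \<in> borel_measurable lborel"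
      using assms(1) by (simp add: measurable_lborel2)
    show "AE y in lborel. norm (f y * exp (- (norm y)\<^sup>2 / 4)) \<le> norm (C * exp (\<alpha> * norm y - (norm y)\<^sup>2 / 4))"
    proof (rule AE_I2)
      fix y
      have "\<bar>f y\<bar> * exp (- (norm y)\<^sup>2 / 4) \<le> C * exp (\<alpha> * norm y) * exp (- (norm y)\<^sup>2 / 4)"
        using f[of y] by (simp add: mult_right_mono)
      then show "norm (f y * exp (- (norm y)\<^sup>2 / 4)) \<le> norm (C * exp (\<alpha> * norm y - (norm y)\<^sup>2 / 4))"
        using \<open>0 \<le> C\<close> by (simp add: abs_mult mult.assoc flip: exp_add)
    qed
  qed
qed

lemma square_norm_shift_bound:
  fixes y z :: "'a::real_normed_vector"
  assumes "norm (z - y) \<le> 1"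
  shows "(norm y)\<^sup>2 - 2 * norm y \<le> (norm z)\<^sup>2"
proof (cases "norm y \<le> 2")
  case True
  then have "(norm y)\<^sup>2 - 2 * norm y \<le> 0"
    by (simp add: power2_eq_square mult_nonpos_nonneg flip: left_diff_distrib)
  then show ?thesis by (meson order_trans zero_le_power2)
next
  case False
  have "norm y - 1 \<le> norm z"
    using norm_triangle_ineq3[of z y] assms by (simp add: norm_minus_commute)
  then have "(norm y - 1)\<^sup>2 \<le> (norm z)\<^sup>2"
    using False by (intro power_mono) auto
  then show ?thesis by (simp add: power2_eq_square algebra_simps)
qed

lemma exp_bounded_gaussian_shift:
  fixes f :: "'a::euclidean_space \<Rightarrow> real"
  assumes "exp_bounded f"
  obtains w where "integrable lborel w"
    and "\<And>y z. norm (z - y) \<le> 1 \<Longrightarrow> \<bar>f z * exp (- (norm z)\<^sup>2 / 4)\<bar> \<le> w y"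
proof -
  obtain C \<alpha> where C: "0 \<le> C" and \<alpha>: "0 \<le> \<alpha>" and f: "\<And>y. \<bar>f y\<bar> \<le> C * exp (\<alpha> * norm y)"
    using assms unfolding exp_bounded_def by blast
  define w where "w y = C * exp \<alpha> * exp ((\<alpha> + 1/2) * norm y - (norm y)\<^sup>2 / 4)" for y :: 'a
  have "integrable lborel w"
    unfolding w_def by (intro integrable_mult_right integrable_exp_linear_gaussian)
  moreover have "\<bar>f z * exp (- (norm z)\<^sup>2 / 4)\<bar> \<le> w y" if yz: "norm (z - y) \<le> 1" for y z
  proof -
    have "norm z \<le> norm y + 1"
      using norm_triangle_ineq2[of z y] yz by simp
    then have "\<alpha> * norm z \<le> \<alpha> * (norm y + 1)"
      using \<alpha> by (rule mult_left_mono)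
    with square_norm_shift_bound[OF yz]
    have "\<alpha> * norm z - (norm z)\<^sup>2 / 4 \<le> \<alpha> + ((\<alpha> + 1/2) * norm y - (norm y)\<^sup>2 / 4)"
      by (simp add: algebra_simps)
    then have exps: "exp (\<alpha> * norm z) * exp (- (norm z)\<^sup>2 / 4) \<le> exp \<alpha> * exp ((\<alpha> + 1/2) * norm y - (norm y)\<^sup>2 / 4)"
      by (simp flip: exp_add)
    have "\<bar>f z * exp (- (norm z)\<^sup>2 / 4)\<bar> \<le> C * exp (\<alpha> * norm z) * exp (- (norm z)\<^sup>2 / 4)"
      using f[of z] by (simp add: abs_mult mult_right_mono)
    also have "\<dots> \<le> C * (exp \<alpha> * exp ((\<alpha> + 1/2) * norm y - (norm y)\<^sup>2 / 4))"
      unfolding mult.assoc using exps C by (rule mult_left_mono)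
    finally show ?thesis
      by (simp add: w_def mult.assoc)
  qed
  ultimately show ?thesis using that by blast
qed

lemma lborel_integral_translate:
  fixes g :: "'a::euclidean_space \<Rightarrow> real"
  assumes [measurable]: "g \<in> borel_measurable borel" and g: "integrable lborel g"
  shows "integrable lborel (\<lambda>y. g (y + c))" "(LINT y|lborel. g (y + c)) = integral\<^sup>L lborel g"
proof -
  have "integrable (distr lborel borel ((+) c)) g"
    using g by (simp add: lborel_distr_plus)
  then show "integrable lborel (\<lambda>y. g (y + c))"
    by (subst (asm) integrable_distr_eq) (auto simp: add.commute)
  have "integral\<^sup>L lborel g = integral\<^sup>L (distr lborel borel ((+) c)) g"
    by (simp add: lborel_distr_plus)
  then show "(LINT y|lborel. g (y + c)) = integral\<^sup>L lborel g"
    by (subst (asm) integral_distr) (auto simp: add.commute)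
qed

text \<open>The difference quotients of \<open>g\<close> along \<open>e\<close> have integral zero by translation invariance;
  by the mean value theorem they are dominated by \<open>w\<close> and converge to \<open>h\<close>.\<close>
lemma lborel_integral_derivative_eq_0:
  fixes g h w :: "'a::euclidean_space \<Rightarrow> real" and e :: 'a
  assumes g_meas [measurable]: "g \<in> borel_measurable borel" and h_meas: "h \<in> borel_measurable borel"
    and g: "integrable lborel g" and w: "integrable lborel w"
    and deriv: "\<And>y s. ((\<lambda>\<sigma>. g (y + \<sigma> *\<^sub>R e)) has_real_derivative h (y + s *\<^sub>R e)) (at s)"
    and bound: "\<And>y \<sigma>. 0 \<le> \<sigma> \<Longrightarrow> \<sigma> \<le> 1 \<Longrightarrow> \<bar>h (y + \<sigma> *\<^sub>R e)\<bar> \<le> w y"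
  shows "integral\<^sup>L lborel h = 0"
proof -
  define S where "S m = inverse (real (Suc m))" for m
  have S: "0 < S m" "S m \<le> 1" for m
    unfolding S_def by (auto simp: field_simps)
  define F where "F m y = (g (y + S m *\<^sub>R e) - g y) / S m" for m y
  have "integral\<^sup>L lborel (F m) = 0" for m
    unfolding F_def using lborel_integral_translate[OF g_meas g, of "S m *\<^sub>R e"] g
    by (simp add: integral_divide_zero Bochner_Integration.integral_diff)
  moreover have "(\<lambda>m. integral\<^sup>L lborel (F m)) \<longlonglongrightarrow> integral\<^sup>L lborel h"
  proof (rule integral_dominated_convergence[where w=w])
    show "F m \<in> borel_measurable lborel" for m
      unfolding F_def by measurable
    show "AE y in lborel. norm (F m y) \<le> w y" for m
    proof (rule AE_I2)
      fix y
      have "\<exists>z>0. z < S m \<and> g (y + S m *\<^sub>R e) - g (y + 0 *\<^sub>R e) = (S m - 0) * h (y + z *\<^sub>R e)"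
        by (rule MVT2[OF S(1)[of m]]) (rule deriv)
      then obtain z where "0 < z" "z < S m" "g (y + S m *\<^sub>R e) - g y = S m * h (y + z *\<^sub>R e)"
        by auto
      then show "norm (F m y) \<le> w y"
        using S[of m] bound[of z y] by (simp add: F_def)
    qed
    show "AE y in lborel. (\<lambda>m. F m y) \<longlonglongrightarrow> h y"
    proof (rule AE_I2)
      fix y
      have "((\<lambda>\<sigma>. (g (y + \<sigma> *\<^sub>R e) - g y) / \<sigma>) \<longlongrightarrow> h y) (at 0)"
        using deriv[of y 0] by (simp add: has_field_derivative_iff)
      moreover have "S \<longlonglongrightarrow> 0"
        unfolding S_def by (rule LIMSEQ_inverse_real_of_nat)
      ultimately show "(\<lambda>m. F m y) \<longlonglongrightarrow> h y"
        using S unfolding F_def tendsto_at_iff_sequentially comp_def by (force simp: less_le)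
    qed
  qed (use w h_meas in auto)
  ultimately show ?thesis by (simp add: LIMSEQ_const_iff)
qed

section \<open>Orthogonality with respect to the heat kernel\<close>

abbreviation G1 :: "real^'n \<Rightarrow> real" where
  "G1 y \<equiv> heatG y (-1)"

lemma G1_eq: "G1 y = (4 * pi) powr (- real CARD('n) / 2) * exp (- (norm y)\<^sup>2 / 4)"
  for y :: "real^'n"
  by (simp add: heatG_def)

lemma G1_measurable: "(G1 :: real^'n \<Rightarrow> real) \<in> borel_measurable borel"
  unfolding G1_eq by simp

lemma integrable_poly_fun_G1:
  fixes p :: "real^'n \<Rightarrow> real \<Rightarrow> real"
  assumes "p \<in> poly_fun"
  shows "integrable lborel (\<lambda>y. p y t * G1 y)"
proof -
  define c where "c = (4 * pi) powr (- real CARD('n) / 2)"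
  have "(\<lambda>x t. c * p x t) \<in> poly_fun"
    using assms by (rule poly_fun_scale)
  then have "integrable lborel (\<lambda>y. c * p y t * exp (- (norm y)\<^sup>2 / 4))"
    by (intro integrable_exp_bounded_gaussian poly_fun_measurable[where p="\<lambda>x t. c * p x t"]
        poly_fun_exp_bounded[where p="\<lambda>x t. c * p x t"])
  then show ?thesis by (simp add: G1_eq c_def mult_ac)
qed

lemma G1_axis_deriv:
  fixes y :: "real^'n"
  shows "((\<lambda>\<sigma>. G1 (y + \<sigma> *\<^sub>R axis i 1)) has_real_derivative
           - ((y + s *\<^sub>R axis i 1) $ i / 2) * G1 (y + s *\<^sub>R axis i 1)) (at s)"
proof -
  define c where "c = (4 * pi) powr (- real CARD('n) / 2)"
  have "(norm (y + \<sigma> *\<^sub>R axis i 1))\<^sup>2 = (norm y)\<^sup>2 + 2 * \<sigma> * y $ i + \<sigma>\<^sup>2" for \<sigma>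
    unfolding power2_norm_eq_inner
    by (simp add: inner_add_left inner_add_right inner_axis inner_axis' inner_axis_axis
        power2_eq_square algebra_simps)
  then have G1_line: "G1 (y + \<sigma> *\<^sub>R axis i 1) = c * exp (- ((norm y)\<^sup>2 + 2 * \<sigma> * y $ i + \<sigma>\<^sup>2) / 4)" for \<sigma>
    by (simp add: G1_eq c_def)
  have "((\<lambda>\<sigma>. c * exp (- ((norm y)\<^sup>2 + 2 * \<sigma> * y $ i + \<sigma>\<^sup>2) / 4)) has_real_derivative
      c * (exp (- ((norm y)\<^sup>2 + 2 * s * y $ i + s\<^sup>2) / 4) * (- (2 * y $ i + 2 * s) / 4))) (at s)"
    by (auto intro!: derivative_eq_intros simp: power2_eq_square field_simps)
  then show ?thesis
    unfolding G1_line by (rule DERIV_cong) (simp add: axis_def field_simps)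
qed

text \<open>The time argument is frozen at 0. This loses nothing, as \<open>gauss_integral\<close> is only applied to
  the time-independent coefficients \<open>Q k\<close> of parabolic expansions.\<close>
definition gauss_integral :: "(real^'n \<Rightarrow> real \<Rightarrow> real) \<Rightarrow> real" where
  "gauss_integral p = (LINT y|lborel. p y 0 * G1 y)"

lemma gauss_integral_cong: "(\<And>y. p y 0 = q y 0) \<Longrightarrow> gauss_integral p = gauss_integral q"
  by (simp add: gauss_integral_def)

lemma gauss_integral_add:
  "p \<in> poly_fun \<Longrightarrow> q \<in> poly_fun \<Longrightarrow>
    gauss_integral (\<lambda>y t. p y t + q y t) = gauss_integral p + gauss_integral q"
  by (simp add: gauss_integral_def distrib_right integrable_poly_fun_G1)

lemma gauss_integral_diff:
  "p \<in> poly_fun \<Longrightarrow> q \<in> poly_fun \<Longrightarrow>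
    gauss_integral (\<lambda>y t. p y t - q y t) = gauss_integral p - gauss_integral q"
  by (simp add: gauss_integral_def left_diff_distrib integrable_poly_fun_G1)

lemma gauss_integral_cmult: "gauss_integral (\<lambda>y t. c * p y t) = c * gauss_integral p"
  by (simp add: gauss_integral_def mult.assoc)

lemma gauss_integral_sum:
  "finite K \<Longrightarrow> (\<And>k. k \<in> K \<Longrightarrow> Q k \<in> poly_fun) \<Longrightarrow>
    gauss_integral (\<lambda>y t. \<Sum>k\<in>K. Q k y t) = (\<Sum>k\<in>K. gauss_integral (Q k))"
  by (simp add: gauss_integral_def sum_distrib_right integrable_poly_fun_G1)

lemma gaussian_integration_by_parts:
  fixes p :: "real^'n \<Rightarrow> real \<Rightarrow> real"
  assumes p: "p \<in> poly_fun"
  shows "gauss_integral (pdx p i) = gauss_integral (\<lambda>y t. y $ i * p y t) / 2"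
proof -
  define c where "c = (4 * pi) powr (- real CARD('n) / 2)"
  \<comment> \<open>\<open>h G1\<close> is the derivative of \<open>p G1\<close> along \<open>axis i 1\<close>, since that of \<open>G1\<close> is \<open>-(y $ i / 2) G1\<close>.\<close>
  define h where "h = (\<lambda>y t. pdx p i y t + - 1 / 2 * (y $ i * p y t))"
  have px: "(\<lambda>y t. y $ i * p y t) \<in> poly_fun"
    using p by (intro pf_mult pf_coord)
  have h: "h \<in> poly_fun"
    unfolding h_def using p px by (intro pf_add poly_fun_pdx poly_fun_scale)
  obtain w where w: "integrable lborel w"
    and w_bound: "\<And>y z. norm (z - y) \<le> 1 \<Longrightarrow> \<bar>c * h z 0 * exp (- (norm z)\<^sup>2 / 4)\<bar> \<le> w y"
    using exp_bounded_gaussian_shift[OF poly_fun_exp_bounded[OF poly_fun_scale[OF h, of c]]] by blast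
  have "(LINT y|lborel. h y 0 * G1 y) = 0"
  proof (rule lborel_integral_derivative_eq_0[where g="\<lambda>y. p y 0 * G1 y" and e="axis i 1"])
    show "(\<lambda>y. p y 0 * G1 y) \<in> borel_measurable borel" "(\<lambda>y. h y 0 * G1 y) \<in> borel_measurable borel"
      by (rule borel_measurable_times[OF poly_fun_measurable G1_measurable], fact)+
    show "integrable lborel (\<lambda>y. p y 0 * G1 y)"
      using p by (rule integrable_poly_fun_G1)
    show "((\<lambda>\<sigma>. p (y + \<sigma> *\<^sub>R axis i 1) 0 * G1 (y + \<sigma> *\<^sub>R axis i 1)) has_real_derivative
        h (y + s *\<^sub>R axis i 1) 0 * G1 (y + s *\<^sub>R axis i 1)) (at s)" for y s
      using DERIV_mult[OF obeys_chain_rule_axis[OF poly_fun_obeys_chain_rule[OF p], of y i 1 0 s] G1_axis_deriv[of y i s]]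
      by (simp add: h_def algebra_simps)
    show "\<bar>h (y + \<sigma> *\<^sub>R axis i 1) 0 * G1 (y + \<sigma> *\<^sub>R axis i 1)\<bar> \<le> w y"
      if "0 \<le> \<sigma>" "\<sigma> \<le> 1" for y \<sigma>
      using w_bound[of "y + \<sigma> *\<^sub>R axis i 1" y] that by (simp add: G1_eq c_def mult_ac)
  qed (rule w)
  then have "gauss_integral h = 0"
    by (simp add: gauss_integral_def)
  moreover have "gauss_integral h = gauss_integral (pdx p i) + - 1 / 2 * gauss_integral (\<lambda>y t. y $ i * p y t)"
    unfolding h_def gauss_integral_cmult[symmetric] using p px
    by (intro gauss_integral_add poly_fun_pdx poly_fun_scale)
  ultimately show ?thesis by simp
qed

lemma poly_fun_laplacian: "p \<in> poly_fun \<Longrightarrow> laplacian p \<in> poly_fun"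
  using poly_fun_sum[of UNIV "\<lambda>i. pdx (pdx p i) i"]
  by (simp add: poly_fun_pdx laplacian_def[abs_def])

lemma poly_fun_radial_deriv: "p \<in> poly_fun \<Longrightarrow> radial_deriv p \<in> poly_fun"
  using poly_fun_sum[of UNIV "\<lambda>i x t. x $ i * pdx p i x t"]
  by (simp add: pf_mult pf_coord poly_fun_pdx radial_deriv_def[abs_def])

definition gauss_inner :: "(real^'n \<Rightarrow> real \<Rightarrow> real) \<Rightarrow> (real^'n \<Rightarrow> real \<Rightarrow> real) \<Rightarrow> real" where
  "gauss_inner f g = gauss_integral (\<lambda>y t. f y t * g y t)"

definition gauss_dirichlet :: "(real^'n \<Rightarrow> real \<Rightarrow> real) \<Rightarrow> (real^'n \<Rightarrow> real \<Rightarrow> real) \<Rightarrow> real" where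
  "gauss_dirichlet f g = gauss_integral (\<lambda>y t. \<Sum>i\<in>UNIV. pdx f i y t * pdx g i y t)"

lemma gauss_inner_commute: "gauss_inner f g = gauss_inner g f"
  by (simp add: gauss_inner_def mult.commute)

lemma gauss_dirichlet_commute: "gauss_dirichlet f g = gauss_dirichlet g f"
  by (simp add: gauss_dirichlet_def mult.commute)

lemma gauss_inner_self_nonneg: "0 \<le> gauss_inner f f"
  unfolding gauss_inner_def gauss_integral_def
  by (intro Bochner_Integration.integral_nonneg) (simp add: G1_eq)

lemma gauss_dirichlet_add_laplacian:
  assumes f: "f \<in> poly_fun" and g: "g \<in> poly_fun"
  shows "gauss_dirichlet f g + gauss_integral (\<lambda>y t. f y t * laplacian g y t) =
    gauss_integral (\<lambda>y t. f y t * radial_deriv g y t) / 2"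
proof -
  have fg: "(\<lambda>y t. f y t * pdx g i y t) \<in> poly_fun" for i
    using f g by (intro pf_mult poly_fun_pdx)
  have grad_fg: "pdx (\<lambda>y t. f y t * pdx g i y t) i =
      (\<lambda>y t. pdx f i y t * pdx g i y t + f y t * pdx (pdx g i) i y t)" for i
    using f g by (intro pdx_mult poly_fun_obeys_chain_rule poly_fun_pdx)
  have "gauss_dirichlet f g + gauss_integral (\<lambda>y t. f y t * laplacian g y t) =
      gauss_integral (\<lambda>y t. (\<Sum>i\<in>UNIV. pdx f i y t * pdx g i y t) + f y t * laplacian g y t)"
    unfolding gauss_dirichlet_def using f g
    by (intro gauss_integral_add[symmetric] poly_fun_sum pf_mult poly_fun_pdx poly_fun_laplacian) auto
  also have "\<dots> = gauss_integral (\<lambda>y t. \<Sum>i\<in>UNIV. pdx (\<lambda>y t. f y t * pdx g i y t) i y t)"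
    by (simp add: grad_fg laplacian_def sum.distrib sum_distrib_left)
  also have "\<dots> = (\<Sum>i\<in>UNIV. gauss_integral (pdx (\<lambda>y t. f y t * pdx g i y t) i))"
    using fg by (intro gauss_integral_sum poly_fun_pdx) auto
  also have "\<dots> = (\<Sum>i\<in>UNIV. gauss_integral (\<lambda>y t. y $ i * (f y t * pdx g i y t))) / 2"
    by (simp add: gaussian_integration_by_parts[OF fg] sum_divide_distrib)
  also have "\<dots> = gauss_integral (\<lambda>y t. f y t * radial_deriv g y t) / 2"
    using fg by (simp add: gauss_integral_sum[symmetric] pf_mult pf_coord radial_deriv_def
        sum_distrib_left mult_ac)
  finally show ?thesis .
qed

lemma gaussian_green:
  assumes f: "f \<in> poly_fun" and g: "g \<in> poly_fun"
  shows "2 * gauss_dirichlet f g =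
    gauss_integral (\<lambda>y t. f y t * (radial_deriv g y t - 2 * laplacian g y t))"
proof -
  have lap: "(\<lambda>y t. f y t * laplacian g y t) \<in> poly_fun"
    and rad: "(\<lambda>y t. f y t * radial_deriv g y t) \<in> poly_fun"
    using pf_mult[OF f poly_fun_laplacian[OF g]] pf_mult[OF f poly_fun_radial_deriv[OF g]] by simp_all
  have "gauss_integral (\<lambda>y t. f y t * (radial_deriv g y t - 2 * laplacian g y t)) =
      gauss_integral (\<lambda>y t. f y t * radial_deriv g y t - 2 * (f y t * laplacian g y t))"
    by (rule gauss_integral_cong) (simp add: algebra_simps)
  also have "\<dots> = gauss_integral (\<lambda>y t. f y t * radial_deriv g y t) -
      2 * gauss_integral (\<lambda>y t. f y t * laplacian g y t)"
    unfolding gauss_integral_cmult[symmetric] using lap rad by (intro gauss_integral_diff poly_fun_scale)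
  finally show ?thesis
    using gauss_dirichlet_add_laplacian[OF f g] by simp
qed

lemma heatG_rescale:
  fixes y :: "real^'n"
  assumes r: "0 < r"
  shows "r ^ CARD('n) * heatG (r *\<^sub>R y) (-(r\<^sup>2)) = G1 y"
proof -
  define n where "n = real CARD('n)"
  have "r\<^sup>2 = r powr 2"
    using powr_realpow[OF r, of 2] by simp
  then have "(r\<^sup>2) powr (- n / 2) = r powr (- n)"
    by (simp add: powr_powr)
  then have prefactor: "(4 * pi * r\<^sup>2) powr (- n / 2) = (4 * pi) powr (- n / 2) * r powr (- n)"
    using r by (simp add: powr_mult)
  have "r ^ CARD('n) = r powr n"
    using powr_realpow[OF r, of "CARD('n)"] r by (simp add: n_def)
  then have cancel: "r ^ CARD('n) * r powr (- n) = 1"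
    using r by (simp add: powr_add[symmetric])
  have exponent: "exp (- (norm (r *\<^sub>R y))\<^sup>2 / (4 * r\<^sup>2)) = exp (- (norm y)\<^sup>2 / 4)"
    using r by (simp add: power_mult_distrib field_simps)
  show ?thesis
    unfolding heatG_def G1_eq minus_minus exponent
    using prefactor cancel by (simp add: n_def mult_ac)
qed

lemma integral_heatG_rescale:
  fixes F :: "real^'n \<Rightarrow> real"
  assumes [measurable]: "F \<in> borel_measurable borel" and r: "0 < r"
  shows "(LINT x|lborel. F x * heatG x (-(r\<^sup>2))) = (LINT y|lborel. F (r *\<^sub>R y) * G1 y)"
proof -
  have [measurable]: "(\<lambda>x::real^'n. heatG x t) \<in> borel_measurable borel" for t
    unfolding heatG_def by simp
  have "(LINT x|lborel. F x * heatG x (-(r\<^sup>2))) =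
      integral\<^sup>L (density (distr lborel borel (\<lambda>x. 0 + r *\<^sub>R x)) (\<lambda>_. \<bar>r\<bar> ^ DIM(real^'n)))
        (\<lambda>x. F x * heatG x (-(r\<^sup>2)))"
    using lborel_affine[of r "0::real^'n"] r by simp
  also have "\<dots> = integral\<^sup>L (distr lborel borel (\<lambda>x. 0 + r *\<^sub>R x))
      (\<lambda>x. \<bar>r\<bar> ^ DIM(real^'n) *\<^sub>R (F x * heatG x (-(r\<^sup>2))))"
    by (rule integral_density) auto
  also have "\<dots> = (LINT y|lborel. \<bar>r\<bar> ^ DIM(real^'n) *\<^sub>R (F (0 + r *\<^sub>R y) * heatG (0 + r *\<^sub>R y) (-(r\<^sup>2))))"
    by (rule integral_distr) auto
  also have "\<dots> = (LINT y|lborel. F (r *\<^sub>R y) * G1 y)"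
  proof -
    have "(\<lambda>y. \<bar>r\<bar> ^ DIM(real^'n) *\<^sub>R (F (0 + r *\<^sub>R y) * heatG (0 + r *\<^sub>R y) (-(r\<^sup>2)))) =
        (\<lambda>y. F (r *\<^sub>R y) * G1 y)"
    proof
      fix y :: "real^'n"
      show "\<bar>r\<bar> ^ DIM(real^'n) *\<^sub>R (F (0 + r *\<^sub>R y) * heatG (0 + r *\<^sub>R y) (-(r\<^sup>2))) = F (r *\<^sub>R y) * G1 y"
        using heatG_rescale[OF r, of y] r by (simp add: mult_ac)
    qed
    then show ?thesis by (rule arg_cong)
  qed
  finally show ?thesis .
qed

lemma gauss_integral_diagonal:
  assumes "\<And>j k. B j k \<in> poly_fun" and "\<And>j k. j \<noteq> k \<Longrightarrow> gauss_integral (B j k) = 0"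
  shows "gauss_integral (\<lambda>y t. \<Sum>j\<le>D. \<Sum>k\<le>D. r ^ (j + k) * B j k y t) =
    (\<Sum>k\<le>D. r ^ (2 * k) * gauss_integral (B k k))"
proof -
  have "gauss_integral (\<lambda>y t. \<Sum>j\<le>D. \<Sum>k\<le>D. r ^ (j + k) * B j k y t) =
      (\<Sum>j\<le>D. \<Sum>k\<le>D. r ^ (j + k) * gauss_integral (B j k))"
    using assms(1) by (simp add: gauss_integral_sum poly_fun_sum poly_fun_scale gauss_integral_cmult)
  also have "\<dots> = (\<Sum>j\<le>D. \<Sum>k\<le>D. if k = j then r ^ (j + j) * gauss_integral (B j j) else 0)"
    using assms(2) by (intro sum.cong) auto
  finally show ?thesis
    by (simp add: mult_2)
qed

lemma square_sum_powers: "(\<Sum>k\<le>D. c k * r ^ k)\<^sup>2 = (\<Sum>j\<le>D. \<Sum>k\<le>D. r ^ (j + k) * (c j * c k))"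
  for c :: "nat \<Rightarrow> real"
  by (simp add: power2_eq_square sum_product power_add mult_ac)

lemma expansion_gauss_dirichlet:
  assumes "caloric_poly u" "parabolic_expansion u D Q"
  shows "2 * gauss_dirichlet (Q j) (Q k) = real k * gauss_inner (Q j) (Q k)"
proof -
  have Q: "Q j \<in> poly_fun" "Q k \<in> poly_fun"
    using assms(2) by (auto simp: parabolic_expansion_def)
  have "2 * gauss_dirichlet (Q j) (Q k) = gauss_integral (\<lambda>y t. real k * (Q j y t * Q k y t))"
    unfolding gaussian_green[OF Q] caloric_expansion_eigen[OF assms]
    by (simp add: mult_ac)
  then show ?thesis
    by (simp add: gauss_integral_cmult gauss_inner_def)
qed

lemma expansion_orthogonal:
  assumes "caloric_poly u" "parabolic_expansion u D Q" "j \<noteq> k"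
  shows "gauss_inner (Q j) (Q k) = 0" "gauss_dirichlet (Q j) (Q k) = 0"
proof -
  have "real k * gauss_inner (Q j) (Q k) = real j * gauss_inner (Q j) (Q k)"
    using expansion_gauss_dirichlet[OF assms(1,2), of j k] expansion_gauss_dirichlet[OF assms(1,2), of k j]
    by (simp add: gauss_inner_commute gauss_dirichlet_commute)
  with assms(3) show "gauss_inner (Q j) (Q k) = 0"
    by simp
  then show "gauss_dirichlet (Q j) (Q k) = 0"
    using expansion_gauss_dirichlet[OF assms(1,2), of j k] by simp
qed

lemma expansion_square:
  assumes "parabolic_expansion u D Q"
  shows "(u (r *\<^sub>R y) (-(r\<^sup>2)))\<^sup>2 = (\<Sum>j\<le>D. \<Sum>k\<le>D. r ^ (j + k) * (Q j y t * Q k y t))"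
proof -
  have "u (r *\<^sub>R y) (-(r\<^sup>2)) = (\<Sum>k\<le>D. Q k y t * r ^ k)"
    using assms unfolding parabolic_expansion_def by blast
  then show ?thesis by (simp add: square_sum_powers)
qed

lemma expansion_grad_sq:
  assumes "u \<in> poly_fun" "parabolic_expansion u D Q"
  shows "r\<^sup>2 * grad_sq u (r *\<^sub>R y) (-(r\<^sup>2)) =
    (\<Sum>j\<le>D. \<Sum>k\<le>D. r ^ (j + k) * (\<Sum>i\<in>UNIV. pdx (Q j) i y t * pdx (Q k) i y t))"
proof -
  have "r\<^sup>2 * grad_sq u (r *\<^sub>R y) (-(r\<^sup>2)) =
      (\<Sum>i\<in>UNIV. \<Sum>j\<le>D. \<Sum>k\<le>D. r ^ (j + k) * (pdx (Q j) i y t * pdx (Q k) i y t))"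
    by (simp add: grad_sq_def sum_distrib_left power_mult_distrib[symmetric]
        expansion_pdx[OF assms, where t=t] square_sum_powers)
  also have "\<dots> = (\<Sum>j\<le>D. \<Sum>k\<le>D. r ^ (j + k) * (\<Sum>i\<in>UNIV. pdx (Q j) i y t * pdx (Q k) i y t))"
    by (simp add: sum_distrib_left sum.swap[of _ UNIV])
  finally show ?thesis .
qed

lemma integral_square_heatG:
  assumes cal: "caloric_poly u" and Q: "parabolic_expansion u D Q" and r: "0 < r"
  shows "(LINT x|lborel. (u x (-(r\<^sup>2)))\<^sup>2 * heatG x (-(r\<^sup>2))) =
    (\<Sum>k\<le>D. gauss_inner (Q k) (Q k) * r ^ (2 * k))"
proof -
  have u: "u \<in> poly_fun" using cal by (simp add: caloric_poly_def)
  have "(LINT x|lborel. (u x (-(r\<^sup>2)))\<^sup>2 * heatG x (-(r\<^sup>2))) =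
      (LINT y|lborel. (u (r *\<^sub>R y) (-(r\<^sup>2)))\<^sup>2 * G1 y)"
    using u by (intro integral_heatG_rescale[OF _ r] borel_measurable_power poly_fun_measurable)
  also have "\<dots> = gauss_integral (\<lambda>y t. \<Sum>j\<le>D. \<Sum>k\<le>D. r ^ (j + k) * (Q j y t * Q k y t))"
    by (simp add: gauss_integral_def expansion_square[OF Q, where t=0])
  also have "\<dots> = (\<Sum>k\<le>D. gauss_inner (Q k) (Q k) * r ^ (2 * k))"
    using Q expansion_orthogonal(1)[OF cal Q]
    by (subst gauss_integral_diagonal) (auto simp: gauss_inner_def parabolic_expansion_def pf_mult mult.commute)
  finally show ?thesis .
qed

lemma integral_grad_sq_heatG:
  assumes cal: "caloric_poly u" and Q: "parabolic_expansion u D Q" and r: "0 < r"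
  shows "2 * r\<^sup>2 * (LINT x|lborel. grad_sq u x (-(r\<^sup>2)) * heatG x (-(r\<^sup>2))) =
    (\<Sum>k\<le>D. real k * gauss_inner (Q k) (Q k) * r ^ (2 * k))"
proof -
  have u: "u \<in> poly_fun" using cal by (simp add: caloric_poly_def)
  have "(LINT x|lborel. grad_sq u x (-(r\<^sup>2)) * heatG x (-(r\<^sup>2))) =
      (LINT y|lborel. grad_sq u (r *\<^sub>R y) (-(r\<^sup>2)) * G1 y)"
    using u unfolding grad_sq_def
    by (intro integral_heatG_rescale[OF _ r] borel_measurable_sum borel_measurable_power
        poly_fun_measurable poly_fun_pdx)
  then have "2 * r\<^sup>2 * (LINT x|lborel. grad_sq u x (-(r\<^sup>2)) * heatG x (-(r\<^sup>2))) =
      2 * gauss_integral (\<lambda>y t. \<Sum>j\<le>D. \<Sum>k\<le>D. r ^ (j + k) * (\<Sum>i\<in>UNIV. pdx (Q j) i y t * pdx (Q k) i y t))"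
    by (simp add: gauss_integral_def mult.assoc expansion_grad_sq[OF u Q, where t=0, symmetric])
  also have "\<dots> = 2 * (\<Sum>k\<le>D. r ^ (2 * k) * gauss_dirichlet (Q k) (Q k))"
    using Q expansion_orthogonal(2)[OF cal Q]
    by (subst gauss_integral_diagonal)
      (auto simp: gauss_dirichlet_def parabolic_expansion_def pf_mult poly_fun_pdx poly_fun_sum)
  also have "\<dots> = (\<Sum>k\<le>D. real k * gauss_inner (Q k) (Q k) * r ^ (2 * k))"
    unfolding sum_distrib_left
    by (intro sum.cong refl) (simp add: expansion_gauss_dirichlet[OF cal Q, symmetric])
  finally show ?thesis .
qed

section \<open>The mean degree estimate\<close>

definition mean_degree :: "(nat \<Rightarrow> real) \<Rightarrow> nat \<Rightarrow> real \<Rightarrow> real" where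
  "mean_degree a D r = (\<Sum>k\<le>D. real k * a k * r ^ (2 * k)) / (\<Sum>k\<le>D. a k * r ^ (2 * k))"

lemma mean_degree_nonneg: "(\<And>k. 0 \<le> a k) \<Longrightarrow> 0 \<le> mean_degree a D r"
  unfolding mean_degree_def by (intro divide_nonneg_nonneg sum_nonneg) auto

lemma high_degree_weight_le:
  fixes a :: "nat \<Rightarrow> real" and d :: nat
  assumes "\<And>k. 0 \<le> a k"
  shows "real d * (\<Sum>k\<in>{..D} - {..<d}. a k) \<le> (\<Sum>k\<le>D. real k * a k)"
proof -
  have "real d * (\<Sum>k\<in>{..D} - {..<d}. a k) \<le> (\<Sum>k\<in>{..D} - {..<d}. real k * a k)"
    unfolding sum_distrib_left using assms by (intro sum_mono mult_right_mono) auto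
  also have "\<dots> \<le> (\<Sum>k\<le>D. real k * a k)"
    using assms by (intro sum_mono2) auto
  finally show ?thesis .
qed

lemma low_degree_mass:
  fixes a :: "nat \<Rightarrow> real" and d :: nat
  assumes a: "\<And>k. 0 \<le> a k" and \<Lambda>: "0 < \<Lambda>"
    and mean_\<Lambda>: "(\<Sum>k\<le>D. real k * a k) \<le> \<Lambda> * (\<Sum>k\<le>D. a k)"
    and mean_d: "(\<Sum>k\<le>D. real k * a k) \<le> (real d - \<epsilon>) * (\<Sum>k\<le>D. a k)"
  shows "min (\<epsilon> / (2 * \<Lambda>)) (1/2) * (\<Sum>k\<le>D. a k) \<le> (\<Sum>k\<in>{..D} \<inter> {..<d}. a k)"
proof -
  define S L H where "S = (\<Sum>k\<le>D. a k)" and "L = (\<Sum>k\<in>{..D} \<inter> {..<d}. a k)"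
    and "H = (\<Sum>k\<in>{..D} - {..<d}. a k)"
  have S: "S = L + H" "0 \<le> S"
    unfolding S_def L_def H_def using a by (simp_all add: sum.Int_Diff[of "{..D}" _ "{..<d}"] sum_nonneg)
  have high: "real d * H \<le> (\<Sum>k\<le>D. real k * a k)"
    unfolding H_def using a by (rule high_degree_weight_le)
  have min_le: "min (\<epsilon> / (2 * \<Lambda>)) (1/2) * S \<le> c * S" if "c = \<epsilon> / (2 * \<Lambda>) \<or> c = 1/2" for c
    using S(2) that by (auto intro: mult_right_mono)
  show ?thesis
    unfolding S_def[symmetric] L_def[symmetric]
  proof (cases "real d \<le> 2 * \<Lambda>")
    case True
    have "\<epsilon> * S \<le> real d * L"
      using high mean_d S by (simp add: S_def algebra_simps)
    also have "\<dots> \<le> 2 * \<Lambda> * L"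
      using True a by (intro mult_right_mono) (auto simp: L_def sum_nonneg)
    finally have "\<epsilon> / (2 * \<Lambda>) * S \<le> L"
      using \<Lambda> by (simp add: field_simps)
    then show "min (\<epsilon> / (2 * \<Lambda>)) (1/2) * S \<le> L"
      using min_le by fastforce
  next
    case False
    then have "\<Lambda> * S \<le> real d / 2 * S"
      using S(2) by (intro mult_right_mono) auto
    then have "real d * H \<le> real d * (S / 2)"
      using high mean_\<Lambda> unfolding S_def by simp
    moreover have "0 < real d"
      using False \<Lambda> by linarith
    ultimately have "1/2 * S \<le> L"
      using S(1) by (simp add: mult_le_cancel_left_pos)
    then show "min (\<epsilon> / (2 * \<Lambda>)) (1/2) * S \<le> L"
      using min_le by fastforce
  qed
qed

lemma degree_excess_term_le:
  fixes d k :: nat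
  assumes a: "0 \<le> a" and \<epsilon>: "0 < \<epsilon>" and \<delta>: "0 < \<delta>" "\<delta> \<le> 1" and d: "1 \<le> d"
  shows "(real k - (real d - 1 + \<epsilon>)) * (a * \<delta> ^ (2 * k)) \<le>
    (if k < d then - \<epsilon> * (\<delta> ^ (2 * (d - 1)) * a) else real k * (a * \<delta> ^ (2 * d)))"
proof (cases "k < d")
  case True
  have "(real k - (real d - 1 + \<epsilon>)) * (a * \<delta> ^ (2 * k)) \<le> - \<epsilon> * (a * \<delta> ^ (2 * k))"
    using True a \<delta> by (intro mult_right_mono) auto
  also have "\<dots> \<le> - \<epsilon> * (a * \<delta> ^ (2 * (d - 1)))"
    using True a \<delta> \<epsilon> by (intro mult_left_mono_neg mult_left_mono power_decreasing) auto
  finally show ?thesis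
    using True by (simp add: mult_ac)
next
  case False
  have "(real k - (real d - 1 + \<epsilon>)) * (a * \<delta> ^ (2 * k)) \<le> real k * (a * \<delta> ^ (2 * k))"
    using d \<epsilon> a \<delta> by (intro mult_right_mono) auto
  also have "\<dots> \<le> real k * (a * \<delta> ^ (2 * d))"
    using False a \<delta> by (intro mult_left_mono power_decreasing) auto
  finally show ?thesis
    using False by simp
qed

text \<open>Degrees below \<open>d\<close> lose at most the factor \<open>\<delta>\<^sup>2\<^sup>(\<^sup>d\<^sup>-\<^sup>1\<^sup>)\<close>, degrees from \<open>d\<close> on are damped by at
  least \<open>\<delta>\<^sup>2\<^sup>d\<close>; for small \<open>\<delta>\<close> the low degrees, which carry a fixed fraction of the mass, win.\<close>
lemma weighted_degree_excess_nonpos: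
  fixes a :: "nat \<Rightarrow> real" and d :: nat
  assumes a: "\<And>k. 0 \<le> a k" and \<epsilon>: "0 < \<epsilon>" and \<delta>: "0 < \<delta>" "\<delta> \<le> 1" and d: "1 \<le> d"
    and low: "m * (\<Sum>k\<le>D. a k) \<le> (\<Sum>k\<in>{..D} \<inter> {..<d}. a k)"
    and mean_\<Lambda>: "(\<Sum>k\<le>D. real k * a k) \<le> \<Lambda> * (\<Sum>k\<le>D. a k)"
    and small: "\<delta>\<^sup>2 * \<Lambda> \<le> \<epsilon> * m"
  shows "(\<Sum>k\<le>D. (real k - (real d - 1 + \<epsilon>)) * (a k * \<delta> ^ (2 * k))) \<le> 0"
proof -
  define q where "q = \<delta> ^ (2 * (d - 1))"
  have "2 * d = 2 * (d - 1) + 2"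
    using d by simp
  then have q: "0 \<le> q" "\<delta> ^ (2 * d) = q * \<delta>\<^sup>2"
    using \<delta> by (simp_all only: q_def power_add) simp
  have "(\<Sum>k\<le>D. (real k - (real d - 1 + \<epsilon>)) * (a k * \<delta> ^ (2 * k))) \<le>
      (\<Sum>k\<le>D. if k < d then - \<epsilon> * (q * a k) else real k * (a k * \<delta> ^ (2 * d)))"
    unfolding q_def using a \<epsilon> \<delta> d by (intro sum_mono degree_excess_term_le)
  also have "\<dots> = \<delta> ^ (2 * d) * (\<Sum>k\<in>{..D} - {..<d}. real k * a k) - \<epsilon> * (q * (\<Sum>k\<in>{..D} \<inter> {..<d}. a k))"
    by (simp add: sum.If_cases sum_distrib_left sum_negf Int_def Diff_eq not_less mult_ac)
  also have "\<dots> \<le> 0"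
  proof -
    have "\<delta>\<^sup>2 * (\<Sum>k\<in>{..D} - {..<d}. real k * a k) \<le> \<delta>\<^sup>2 * (\<Sum>k\<le>D. real k * a k)"
      using a by (intro mult_left_mono sum_mono2) auto
    also have "\<dots> \<le> \<delta>\<^sup>2 * \<Lambda> * (\<Sum>k\<le>D. a k)"
      using mean_\<Lambda> by (simp add: mult.assoc mult_left_mono)
    also have "\<dots> \<le> \<epsilon> * m * (\<Sum>k\<le>D. a k)"
      using small a by (intro mult_right_mono sum_nonneg) auto
    also have "\<dots> \<le> \<epsilon> * (\<Sum>k\<in>{..D} \<inter> {..<d}. a k)"
      using low \<epsilon> by (simp add: mult.assoc mult_left_mono)
    finally have "q * (\<delta>\<^sup>2 * (\<Sum>k\<in>{..D} - {..<d}. real k * a k)) \<le> q * (\<epsilon> * (\<Sum>k\<in>{..D} \<inter> {..<d}. a k))"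
      using q(1) by (rule mult_left_mono)
    then show ?thesis
      unfolding q(2) by (simp add: mult_ac)
  qed
  finally show ?thesis .
qed

lemma mean_degree_drop:
  fixes a :: "nat \<Rightarrow> real" and d :: int
  assumes a: "\<And>k. 0 \<le> a k" and \<Lambda>: "0 < \<Lambda>" and \<epsilon>: "0 < \<epsilon>" and \<delta>: "0 < \<delta>" "\<delta> \<le> 1"
    and small: "\<delta>\<^sup>2 * \<Lambda> \<le> \<epsilon> * min (\<epsilon> / (2 * \<Lambda>)) (1/2)"
    and mean_\<Lambda>: "mean_degree a D 1 \<le> \<Lambda>" and mean_d: "mean_degree a D 1 \<le> real_of_int d - \<epsilon>"
  shows "mean_degree a D \<delta> \<le> real_of_int d - 1 + \<epsilon>"
proof -
  define n where "n = nat d"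
  have "0 \<le> mean_degree a D 1"
    using a by (rule mean_degree_nonneg)
  then have n: "real_of_int d = real n" "1 \<le> n"
    using mean_d \<epsilon> by (auto simp: n_def)
  define S where "S = (\<Sum>k\<le>D. a k * \<delta> ^ (2 * k))"
  show ?thesis
  proof (cases "(\<Sum>k\<le>D. a k) = 0")
    case True
    then have "mean_degree a D \<delta> = 0"
      using a by (simp add: mean_degree_def sum_nonneg_eq_0_iff)
    then show ?thesis using n \<epsilon> by simp
  next
    case False
    then have "0 < (\<Sum>k\<le>D. a k)"
      using a by (simp add: order_le_neq_trans sum_nonneg)
    with mean_\<Lambda> mean_d n
    have mean_\<Lambda>': "(\<Sum>k\<le>D. real k * a k) \<le> \<Lambda> * (\<Sum>k\<le>D. a k)"
      and mean_n: "(\<Sum>k\<le>D. real k * a k) \<le> (real n - \<epsilon>) * (\<Sum>k\<le>D. a k)"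
      by (simp_all add: mean_degree_def pos_divide_le_eq)
    have "(\<Sum>k\<le>D. (real k - (real n - 1 + \<epsilon>)) * (a k * \<delta> ^ (2 * k))) \<le> 0"
      using low_degree_mass[OF a \<Lambda> mean_\<Lambda>' mean_n] mean_\<Lambda>' small
      by (rule weighted_degree_excess_nonpos[OF a \<epsilon> \<delta> n(2)])
    moreover have "(\<Sum>k\<le>D. (real k - (real n - 1 + \<epsilon>)) * (a k * \<delta> ^ (2 * k))) =
        (\<Sum>k\<le>D. real k * a k * \<delta> ^ (2 * k)) - (real n - 1 + \<epsilon>) * S"
      by (simp add: S_def left_diff_distrib sum_subtractf sum_distrib_left mult.assoc)
    ultimately have "(\<Sum>k\<le>D. real k * a k * \<delta> ^ (2 * k)) \<le> (real n - 1 + \<epsilon>) * S"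
      by linarith
    moreover have "0 \<le> S"
      unfolding S_def using a \<delta> by (intro sum_nonneg) simp
    ultimately show ?thesis
      using n \<epsilon> by (cases "S = 0") (simp_all add: mean_degree_def S_def[symmetric] divide_le_eq)
  qed
qed

lemma freq_eq_mean_degree:
  assumes "caloric_poly u" "parabolic_expansion u D Q" "0 < r"
  shows "freq u r = mean_degree (\<lambda>k. gauss_inner (Q k) (Q k)) D r"
  by (simp add: freq_def mean_degree_def integral_square_heatG[OF assms]
      integral_grad_sq_heatG[OF assms, symmetric])

theorem lemma2p5:
  fixes \<Lambda> \<epsilon> :: real
  assumes "\<Lambda> > 0" and "\<epsilon> > 0"
  shows "\<exists>\<delta>>0. \<forall>(u :: real^'n \<Rightarrow> real \<Rightarrow> real) (d :: int).
           caloric_poly u \<and> u \<noteq> (\<lambda>x t. 0) \<and> freq u 1 \<le> \<Lambda> \<and> freq u 1 \<le> real_of_int d - \<epsilon>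
           \<longrightarrow> freq u \<delta> \<le> real_of_int d - 1 + \<epsilon>"
proof -
  define m where "m = min (\<epsilon> / (2 * \<Lambda>)) (1/2)"
  define \<delta> where "\<delta> = sqrt (min 1 (\<epsilon> * m / \<Lambda>))"
  have "0 < m"
    using assms by (simp add: m_def)
  then have \<delta>: "0 < \<delta>" "\<delta> \<le> 1" and \<delta>_sq: "\<delta>\<^sup>2 = min 1 (\<epsilon> * m / \<Lambda>)"
    using assms by (simp_all add: \<delta>_def)
  have "\<delta>\<^sup>2 * \<Lambda> \<le> \<epsilon> * m / \<Lambda> * \<Lambda>"
    unfolding \<delta>_sq using assms by (intro mult_right_mono) auto
  then have small: "\<delta>\<^sup>2 * \<Lambda> \<le> \<epsilon> * m"
    using assms by simp
  have "freq u \<delta> \<le> real_of_int d - 1 + \<epsilon>"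
    if u: "caloric_poly u" and "freq u 1 \<le> \<Lambda>" "freq u 1 \<le> real_of_int d - \<epsilon>"
    for u :: "real^'n \<Rightarrow> real \<Rightarrow> real" and d
  proof -
    have "u \<in> poly_fun"
      using u by (simp add: caloric_poly_def)
    then obtain D Q where Q: "parabolic_expansion u D Q"
      using poly_fun_parabolic_expansion by blast
    show ?thesis
      using that(2,3) mean_degree_drop[OF gauss_inner_self_nonneg assms \<delta> small[unfolded m_def]]
      unfolding freq_eq_mean_degree[OF u Q \<delta>(1)] freq_eq_mean_degree[OF u Q zero_less_one] by blast
  qed
  with \<delta>(1) show ?thesis
    by blast
qed

end
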